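(* Suppose there exists a $\mathcal{KL}_{\rm gen}$-$\operatorname{Fin}(X^{\rm in})$ upper bound $(\gamma,\theta)$ for $(X^{\rm in},T,\varphi)$. Then there exists $h\in\Omega([0,1])$ such that $\nu_k\le h(e^{-k})$ for all $k\in\mathbb N$. If moreover $(\gamma,\theta)$ is useful for $\nu$, then $h$ can be chosen so that $\{k\in\mathbb N:\nu_k>h(0)\}\neq\emptyset$.
   Context: Standing data: a nonempty set $X^{\rm in}\subseteq\mathbb R^d$, a map $T:\mathbb R^d\to\mathbb R^d$ ($T^k$ its $k$-fold composition), $\varphi:\mathbb R^d\to\mathbb R$ with $\varphi(0)=0$; $\nu_k=\sup_{x\in X^{\rm in}}\varphi(T^k(x))$, assumed finite for every $k$; $G^{>}_\nu=\{k:\nu_k>\limsup_n\nu_n\}$. $\Omega([0,1])$: functions $h:\mathbb R\to\mathbb R$ whose restriction to $[0,1]$ is strictly increasing and continuous. For $f:\mathbb R^d\to\mathbb R\cup\{+\infty\}$, $\overline f=\sup_{X^{\rm in}}f$; $\operatorname{Fin}(X^{\rm in})=\{f:\overline f<+\infty\}$. $\mathcal{KL}_{\rm gen}$: functions $\gamma:\mathbb R\times\mathbb R_+\to\mathbb R$, increasing in the first variable for each fixed second variable and decreasing in the second variable for each fixed first variable (not necessarily strictly, not necessarily continuous). $(\gamma,\theta)\in\mathcal{KL}_{\rm gen}\times\operatorname{Fin}(X^{\rm in})$ is a $\mathcal{KL}_{\rm gen}$-$\operatorname{Fin}(X^{\rm in})$ upper bound if $\varphi(T^k(x))\le\gamma(\theta(x),k)$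 for all $k\in\mathbb N$, $x\in X^{\rm in}$; it is useful for $\nu$ if $\{k\in G^{>}_\nu:\inf_{t\ge0}\gamma(\overline\theta,t)<\nu_k\}\ne\emptyset$. *)

theory Defs
  imports "HOL-Analysis.Analysis"
begin

definition nu :: "(real^'d) set \<Rightarrow> (real^'d \<Rightarrow> real^'d) \<Rightarrow> (real^'d \<Rightarrow> real) \<Rightarrow> nat \<Rightarrow> real" where
  "nu Xin T \<phi> k = (SUP x\<in>Xin. \<phi> ((T ^^ k) x))"

definition G_gt :: "(nat \<Rightarrow> real) \<Rightarrow> nat set" where
  "G_gt \<nu> = {k. ereal (\<nu> k) > limsup (\<lambda>n. ereal (\<nu> n))}"

definition Omega01 :: "(real \<Rightarrow> real) set" where
  "Omega01 = {h. strict_mono_on {0..1} h \<and> continuous_on {0..1} h}"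

definition sup_on :: "'a set \<Rightarrow> ('a \<Rightarrow> ereal) \<Rightarrow> ereal" where
  "sup_on Xin f = (SUP x\<in>Xin. f x)"

text \<open>Functions R^d -> R \<union> {+\<infinity>} are modelled as ereal-valued functions never equal to -\<infinity>.\<close>
definition Fin :: "'a set \<Rightarrow> ('a \<Rightarrow> ereal) set" where
  "Fin Xin = {f. (\<forall>x. f x \<noteq> -\<infinity>) \<and> sup_on Xin f < \<infinity>}"

text \<open>KL_gen: gamma : R x R_+ -> R, increasing in first variable, decreasing in second
  (on t \<ge> 0; values at t < 0 are irrelevant).\<close>
definition KL_gen :: "(real \<Rightarrow> real \<Rightarrow> real) set" where
  "KL_gen = {\<gamma>. (\<forall>t\<ge>0. mono (\<lambda>r. \<gamma> r t)) \<and>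
                  (\<forall>r s t. 0 \<le> s \<longrightarrow> s \<le> t \<longrightarrow> \<gamma> r t \<le> \<gamma> r s)}"

definition is_KL_Fin_upper_bound ::
  "(real^'d) set \<Rightarrow> (real^'d \<Rightarrow> real^'d) \<Rightarrow> (real^'d \<Rightarrow> real) \<Rightarrow>
   (real \<Rightarrow> real \<Rightarrow> real) \<Rightarrow> (real^'d \<Rightarrow> ereal) \<Rightarrow> bool" where
  "is_KL_Fin_upper_bound Xin T \<phi> \<gamma> \<theta> \<longleftrightarrow>
     \<gamma> \<in> KL_gen \<and> \<theta> \<in> Fin Xin \<and>
     (\<forall>k::nat. \<forall>x\<in>Xin. \<phi> ((T ^^ k) x) \<le> \<gamma> (real_of_ereal (\<theta> x)) (real k))"

definition is_useful ::
  "(real \<Rightarrow> real \<Rightarrow> real) \<Rightarrow> ereal \<Rightarrow> (nat \<Rightarrow> real) \<Rightarrow> bool" where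
  "is_useful \<gamma> thbar \<nu> \<longleftrightarrow>
     {k \<in> G_gt \<nu>. (INF t\<in>{0::real..}. ereal (\<gamma> (real_of_ereal thbar) t)) < ereal (\<nu> k)} \<noteq> {}"

end

theory Submission
  imports Defs
begin

text \<open>Both claims reduce to one fact about real sequences: if \<open>\<nu>\<close> is bounded above and
  \<open>\<nu> k \<le> a\<close> for all large \<open>k\<close>, then the affine map \<open>h s = a + B s\<close> satisfies \<open>\<nu> k \<le> h (exp (-k))\<close>
  once the slope \<open>B\<close> is large enough to cover the finitely many early terms, and \<open>h 0 = a\<close>.
  The upper bound gives \<open>\<nu> k \<le> \<gamma> \<theta>' t\<close> for \<open>0 \<le> t \<le> k\<close>, where \<open>\<theta>'\<close> is the supremum of \<open>\<theta>\<close>;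
  so \<open>a = \<gamma> \<theta>' 0\<close> works in general, and a time \<open>t\<close> with \<open>\<gamma> \<theta>' t < \<nu> k\<^sub>0\<close>, which usefulness
  provides, gives \<open>h 0 < \<nu> k\<^sub>0\<close>.\<close>

lemma affine_in_Omega01:
  assumes "(B::real) > 0"
  shows "(\<lambda>s. a + B * s) \<in> Omega01"
  unfolding Omega01_def
proof (intro CollectI conjI)
  show "strict_mono_on {0..1} (\<lambda>s. a + B * s)"
    by (rule strict_mono_onI) (use assms in auto)
  show "continuous_on {0..1} (\<lambda>s. a + B * s)"
    by (intro continuous_intros)
qed

lemma exists_Omega01_majorant:
  fixes \<nu> :: "nat \<Rightarrow> real"
  assumes bound: "\<And>k. \<nu> k \<le> M"
    and tail: "\<And>k. k \<ge> N \<Longrightarrow> \<nu> k \<le> a"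
  shows "\<exists>h\<in>Omega01. h 0 = a \<and> (\<forall>k. \<nu> k \<le> h (exp (- real k)))"
proof -
  define B where "B = \<bar>M - a\<bar> * exp (real N) + 1"
  have B_pos: "B > 0"
    unfolding B_def by (simp add: add_nonneg_pos)
  have "\<nu> k \<le> a + B * exp (- real k)" for k
  proof (cases "k \<ge> N")
    case True
    then show ?thesis
      using tail[of k] B_pos by (simp add: add_increasing2)
  next
    case False
    have "exp (real N) * exp (- real k) \<ge> 1"
      using False by (simp add: exp_minus field_simps)
    then have "\<bar>M - a\<bar> \<le> \<bar>M - a\<bar> * (exp (real N) * exp (- real k))"
      by (simp add: mult_le_cancel_left1)
    also have "\<dots> \<le> B * exp (- real k)"
      unfolding B_def by (simp add: algebra_simps)
    finally show ?thesis
      using bound[of k] by linarith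
  qed
  moreover have "(\<lambda>s. a + B * s) \<in> Omega01"
    by (rule affine_in_Omega01[OF B_pos])
  ultimately show ?thesis
    by (intro bexI[of _ "\<lambda>s. a + B * s"]) auto
qed

lemma KL_gen_mono_left:
  assumes "\<gamma> \<in> KL_gen" "t \<ge> 0" "r \<le> s"
  shows "\<gamma> r t \<le> \<gamma> s t"
  using assms unfolding KL_gen_def mono_def by blast

lemma KL_gen_antimono_right:
  assumes "\<gamma> \<in> KL_gen" "0 \<le> s" "s \<le> t"
  shows "\<gamma> r t \<le> \<gamma> r s"
  using assms unfolding KL_gen_def by blast

lemma real_of_ereal_le_sup_on:
  assumes "f \<in> Fin Xin" "x \<in> Xin"
  shows "real_of_ereal (f x) \<le> real_of_ereal (sup_on Xin f)"
proof -
  have fx: "f x \<noteq> -\<infinity>" and sup_fin: "sup_on Xin f < \<infinity>"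
    using assms(1) unfolding Fin_def by auto
  have "f x \<le> sup_on Xin f"
    unfolding sup_on_def using assms(2) by (rule SUP_upper)
  then show ?thesis
    using fx sup_fin by (cases "f x"; cases "sup_on Xin f") auto
qed

lemma nu_le_KL_bound:
  assumes "Xin \<noteq> {}" "is_KL_Fin_upper_bound Xin T \<phi> \<gamma> \<theta>"
  shows "nu Xin T \<phi> k \<le> \<gamma> (real_of_ereal (sup_on Xin \<theta>)) (real k)"
  unfolding nu_def
proof (rule cSUP_least[OF assms(1)])
  fix x assume x: "x \<in> Xin"
  have KL: "\<gamma> \<in> KL_gen" and Fin: "\<theta> \<in> Fin Xin"
    using assms(2) unfolding is_KL_Fin_upper_bound_def by auto
  have "\<phi> ((T ^^ k) x) \<le> \<gamma> (real_of_ereal (\<theta> x)) (real k)"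
    using assms(2) x unfolding is_KL_Fin_upper_bound_def by auto
  also have "\<dots> \<le> \<gamma> (real_of_ereal (sup_on Xin \<theta>)) (real k)"
    by (rule KL_gen_mono_left[OF KL _ real_of_ereal_le_sup_on[OF Fin x]]) simp
  finally show "\<phi> ((T ^^ k) x) \<le> \<gamma> (real_of_ereal (sup_on Xin \<theta>)) (real k)" .
qed

theorem mainTheorem11:
  fixes Xin :: "(real^'d) set" and T :: "real^'d \<Rightarrow> real^'d" and \<phi> :: "real^'d \<Rightarrow> real"
    and \<gamma> :: "real \<Rightarrow> real \<Rightarrow> real" and \<theta> :: "real^'d \<Rightarrow> ereal"
  assumes "Xin \<noteq> {}"
    and "\<phi> 0 = 0"
    and "\<And>k. bdd_above ((\<lambda>x. \<phi> ((T ^^ k) x)) ` Xin)"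
    and "is_KL_Fin_upper_bound Xin T \<phi> \<gamma> \<theta>"
  shows "(\<exists>h\<in>Omega01. \<forall>k::nat. nu Xin T \<phi> k \<le> h (exp (- real k)))
    \<and> (is_useful \<gamma> (sup_on Xin \<theta>) (nu Xin T \<phi>) \<longrightarrow>
        (\<exists>h\<in>Omega01. (\<forall>k::nat. nu Xin T \<phi> k \<le> h (exp (- real k)))
                      \<and> {k. nu Xin T \<phi> k > h 0} \<noteq> {}))"
proof -
  define th where "th = real_of_ereal (sup_on Xin \<theta>)"
  have KL: "\<gamma> \<in> KL_gen"
    using assms(4) unfolding is_KL_Fin_upper_bound_def by blast
  have nu_le: "nu Xin T \<phi> k \<le> \<gamma> th t" if "0 \<le> t" "t \<le> real k" for k t
    using nu_le_KL_bound[OF assms(1,4), of k] KL_gen_antimono_right[OF KL that, of th]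
    unfolding th_def by linarith
  have nu_bounded: "nu Xin T \<phi> k \<le> \<gamma> th 0" for k
    using nu_le[of 0 k] by simp
  have "\<exists>h\<in>Omega01. \<forall>k. nu Xin T \<phi> k \<le> h (exp (- real k))"
    using exists_Omega01_majorant[of "nu Xin T \<phi>", OF nu_bounded nu_bounded] by blast
  moreover have "\<exists>h\<in>Omega01. (\<forall>k. nu Xin T \<phi> k \<le> h (exp (- real k)))
                      \<and> {k. nu Xin T \<phi> k > h 0} \<noteq> {}"
    if useful: "is_useful \<gamma> (sup_on Xin \<theta>) (nu Xin T \<phi>)"
  proof -
    obtain k0 where "(INF t\<in>{0::real..}. ereal (\<gamma> th t)) < ereal (nu Xin T \<phi> k0)"
      using useful unfolding is_useful_def th_def by auto
    then obtain t where t: "t \<ge> 0" "\<gamma> th t < nu Xin T \<phi> k0"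
      by (auto simp: INF_less_iff)
    have "nu Xin T \<phi> k \<le> \<gamma> th t" if "k \<ge> nat \<lceil>t\<rceil>" for k
      using that by (intro nu_le[OF t(1)]) linarith
    then obtain h where h: "h \<in> Omega01" "h 0 = \<gamma> th t"
        "\<forall>k. nu Xin T \<phi> k \<le> h (exp (- real k))"
      using exists_Omega01_majorant[of "nu Xin T \<phi>", OF nu_bounded] by blast
    moreover have "k0 \<in> {k. nu Xin T \<phi> k > h 0}"
      using h(2) t(2) by simp
    ultimately show ?thesis
      by blast
  qed
  ultimately show ?thesis
    by blast
qed

end
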